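(* Let $T>0$, $\mu>0$ and $f\in L^2(0,T)$. For $t\in[0,T]$ set $\mathsf{C}(t,f):=\int_0^t\cos(\sqrt{\mu}(t-s))f(s)\,ds$ and $\mathsf{S}(t,f):=\int_0^t\sin(\sqrt{\mu}(t-s))f(s)\,ds$. Then for all $w\in H^1_{0,}(0,T)$, \[ \int_0^T f(t)\,(\mathsf{T}_\mu w)(t)\,dt = \int_0^T\big[w'(t)\,\mathsf{C}(t,f)+\sqrt{\mu}\,w(t)\,\mathsf{S}(t,f)\big]\,dt, \] and \[ \int_0^T\big[\mathsf{C}(t,f)^2+\mathsf{S}(t,f)^2\big]\,dt\le \frac{T^2}{2}\|f\|_{L^2(0,T)}^2 . \] Consequently $\int_0^T f\,\mathsf{T}_\mu w\,dt\le \frac{T}{\sqrt2}\|f\|_{L^2(0,T)}\|w\|_{H^1_\mu}$ for all $w\in H^1_{0,}(0,T)$, and the unique $u\in H^1_{0,}(0,T)$ with $b_\mu(u,\mathsf{T}_\mu w)=\int_0^T f\,\mathsf{T}_\mu w\,dt$ for all $w\in H^1_{0,}(0,T)$ satisfies $\|u\|_{H^1_\mu}\le \frac{T}{\sqrt2}\|f\|_{L^2(0,T)}$.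
   Context: All functions are real valued. $H^1_{0,}(0,T):=\{v\in H^1(0,T): v(0)=0\}$. $b_\mu(u,v):=\int_0^T[-u'(t)v'(t)+\mu u(t)v(t)]\,dt$. $\|w\|_{H^1_\mu}:=(\|w'\|_{L^2(0,T)}^2+\mu\|w\|_{L^2(0,T)}^2)^{1/2}$. For $w\in H^1_{0,}(0,T)$, \[ (\mathsf{T}_\mu w)(t) := \int_t^T\Big[\cos(\sqrt{\mu}(t-s))\,w'(s) -\sqrt{\mu}\,\sin(\sqrt{\mu}(t-s))\,w(s)\Big]\, ds . \] *)

theory Defs
  imports "HOL-Analysis.Analysis"
begin

definition L2_on :: "real \<Rightarrow> (real \<Rightarrow> real) \<Rightarrow> bool" where
  "L2_on T f \<longleftrightarrow> set_borel_measurable lborel {0..T} f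
      \<and> set_integrable lborel {0..T} (\<lambda>t. (f t)^2)"

definition L2_norm :: "real \<Rightarrow> (real \<Rightarrow> real) \<Rightarrow> real" where
  "L2_norm T f = sqrt (LBINT t=0..T. (f t)^2)"

text \<open>v belongs to H1(0,T) with (weak) derivative v': v' in L2(0,T) and v is
  (the absolutely continuous representative) v(t) = v(0) + integral of v' over [0,t].\<close>
definition H1_deriv :: "real \<Rightarrow> (real \<Rightarrow> real) \<Rightarrow> (real \<Rightarrow> real) \<Rightarrow> bool" where
  "H1_deriv T v v' \<longleftrightarrow> L2_on T v' \<and> (\<forall>t\<in>{0..T}. v t = v 0 + (LBINT s=0..t. v' s))"

definition H10 :: "real \<Rightarrow> (real \<Rightarrow> real) \<Rightarrow> (real \<Rightarrow> real) \<Rightarrow> bool" where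
  "H10 T w w' \<longleftrightarrow> H1_deriv T w w' \<and> w 0 = 0"

definition H1mu_norm :: "real \<Rightarrow> real \<Rightarrow> (real \<Rightarrow> real) \<Rightarrow> (real \<Rightarrow> real) \<Rightarrow> real" where
  "H1mu_norm T \<mu> w w' = sqrt ((LBINT t=0..T. (w' t)^2) + \<mu> * (LBINT t=0..T. (w t)^2))"

definition b_mu :: "real \<Rightarrow> real \<Rightarrow> (real \<Rightarrow> real) \<Rightarrow> (real \<Rightarrow> real)
    \<Rightarrow> (real \<Rightarrow> real) \<Rightarrow> (real \<Rightarrow> real) \<Rightarrow> real" where
  "b_mu T \<mu> u u' v v' = (LBINT t=0..T. - u' t * v' t + \<mu> * u t * v t)"

definition T_mu :: "real \<Rightarrow> real \<Rightarrow> (real \<Rightarrow> real) \<Rightarrow> (real \<Rightarrow> real) \<Rightarrow> real \<Rightarrow> real" where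
  "T_mu T \<mu> w w' t = (LBINT s=t..T. cos (sqrt \<mu> * (t - s)) * w' s
                                    - sqrt \<mu> * sin (sqrt \<mu> * (t - s)) * w s)"

definition Cf :: "real \<Rightarrow> (real \<Rightarrow> real) \<Rightarrow> real \<Rightarrow> real" where
  "Cf \<mu> f t = (LBINT s=0..t. cos (sqrt \<mu> * (t - s)) * f s)"

definition Sf :: "real \<Rightarrow> (real \<Rightarrow> real) \<Rightarrow> real \<Rightarrow> real" where
  "Sf \<mu> f t = (LBINT s=0..t. sin (sqrt \<mu> * (t - s)) * f s)"

end

theory Submission
  imports Defs
begin

(* Put a = sqrt mu. By the angle-subtraction formulas, T_mu w, its companion S_mu w (kernel
   sin(a(t-s)) w' + a cos(a(t-s)) w) and Cf f, Sf f are rotations of indefinite integrals, so they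
   solve the first-order systems
     v' = -a s - w',  s' = a (v - w),  v(T) = s(T) = 0   for v = T_mu w, s = S_mu w,
     C' = f - a S,    S' = a C,        C(0) = S(0) = 0   for C = Cf f, S = Sf f.
   Hence (C v + S s)' = f v - (w' C + a w S) integrates to zero, which is the adjoint identity.
   Cauchy-Schwarz gives C(t)^2 + S(t)^2 <= t |f|^2, whose integral is the T^2/2 bound, and combined
   with the adjoint identity it bounds the functional. Finally (u s)' = u' s + a u (v - u) also
   integrates to zero, and with a^2 = mu this turns b_mu(u, T_mu u) into the squared H1_mu norm of u,
   so testing the variational equation with w = u bounds that norm.
   Derivatives are meant for absolutely continuous functions, whose product rule comes from Fubini's
   theorem on the triangle s <= t. *)

section \<open>Set integrals and the Cauchy-Schwarz inequality\<close>

lemma set_borel_measurable_mult: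
  fixes f g :: "'a \<Rightarrow> real"
  assumes "set_borel_measurable M A f" "set_borel_measurable M A g"
  shows "set_borel_measurable M A (\<lambda>x. f x * g x)"
proof -
  have "(\<lambda>x. indicator A x *\<^sub>R (f x * g x)) = (\<lambda>x. (indicator A x *\<^sub>R f x) * (indicator A x *\<^sub>R g x))"
    by (auto simp: indicator_def)
  then show ?thesis
    using assms unfolding set_borel_measurable_def by simp
qed

lemma set_borel_measurable_continuous_on:
  fixes g :: "real \<Rightarrow> real"
  shows "continuous_on {a..b} g \<Longrightarrow> set_borel_measurable lborel {a..b} g"
  using set_measurable_continuous_on[of "{a..b}" g] by (simp add: set_borel_measurable_def)

lemma set_integrable_if_square_integrable:
  fixes f :: "'a \<Rightarrow> real"
  assumes "A \<in> sets M" "emeasure M A < \<infinity>"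
    and "set_borel_measurable M A f" "set_integrable M A (\<lambda>x. (f x)^2)"
  shows "set_integrable M A f"
proof (rule set_integrable_bound[OF _ assms(3)])
  have "set_integrable M A (\<lambda>_. 1::real)"
    using assms(1,2) by (simp add: set_integrable_def integrable_indicator_iff)
  then show "set_integrable M A (\<lambda>x. 1 + (f x)^2)"
    using assms(4) by (rule set_integral_add(1))
  have "\<bar>y\<bar> \<le> 1 + y^2" for y :: real
    using sum_squares_bound[of "\<bar>y\<bar>" 1] by simp
  then show "AE x in M. x \<in> A \<longrightarrow> norm (f x) \<le> norm (1 + (f x)^2)"
    by auto
qed

lemma set_integrable_mult_if_square_integrable:
  fixes f g :: "'a \<Rightarrow> real"
  assumes "set_borel_measurable M A f" "set_integrable M A (\<lambda>x. (f x)^2)"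
    and "set_borel_measurable M A g" "set_integrable M A (\<lambda>x. (g x)^2)"
  shows "set_integrable M A (\<lambda>x. f x * g x)"
proof (rule set_integrable_bound[OF _ set_borel_measurable_mult[OF assms(1,3)]])
  show "set_integrable M A (\<lambda>x. (f x)^2 + (g x)^2)"
    using assms(2,4) by (rule set_integral_add(1))
  have "\<bar>x * y\<bar> \<le> x^2 + y^2" for x y :: real
  proof -
    have "2 * (\<bar>x\<bar> * \<bar>y\<bar>) \<le> x^2 + y^2"
      using sum_squares_bound[of "\<bar>x\<bar>" "\<bar>y\<bar>"] by (simp add: mult.assoc)
    then show ?thesis
      unfolding abs_mult using mult_nonneg_nonneg[OF abs_ge_zero[of x] abs_ge_zero[of y]] by linarith
  qed
  then show "AE x in M. x \<in> A \<longrightarrow> norm (f x * g x) \<le> norm ((f x)^2 + (g x)^2)"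
    by auto
qed

lemma set_integrable_mult_continuous_on:
  fixes f g :: "real \<Rightarrow> real"
  assumes f: "set_integrable lborel {a..b} f" and g: "continuous_on {a..b} g"
  shows "set_integrable lborel {a..b} (\<lambda>t. g t * f t)"
proof -
  obtain B where B: "\<And>t. t \<in> {a..b} \<Longrightarrow> \<bar>g t\<bar> \<le> B"
    using compact_imp_bounded[OF compact_continuous_image[OF g compact_Icc]]
    unfolding bounded_iff by (metis imageI real_norm_def)
  have "set_borel_measurable lborel {a..b} g"
    using g by (rule set_borel_measurable_continuous_on)
  moreover have "set_borel_measurable lborel {a..b} f"
    using f unfolding set_integrable_def set_borel_measurable_def by (rule borel_measurable_integrable)
  ultimately have "set_borel_measurable lborel {a..b} (\<lambda>t. g t * f t)"
    by (rule set_borel_measurable_mult)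
  then show ?thesis
  proof (rule set_integrable_bound[rotated])
    show "set_integrable lborel {a..b} (\<lambda>t. B * f t)"
      using f by simp
    show "AE t in lborel. t \<in> {a..b} \<longrightarrow> norm (g t * f t) \<le> norm (B * f t)"
    proof (intro AE_I2 impI)
      fix t assume "t \<in> {a..b}"
      then have "\<bar>g t\<bar> * \<bar>f t\<bar> \<le> \<bar>B\<bar> * \<bar>f t\<bar>"
        using B[of t] by (intro mult_right_mono) auto
      then show "norm (g t * f t) \<le> norm (B * f t)"
        by (simp add: abs_mult)
    qed
  qed
qed

lemma set_integral_mono_set:
  fixes f :: "'a \<Rightarrow> real"
  assumes "set_integrable M B f" "A \<in> sets M" "A \<subseteq> B" "\<And>x. x \<in> B \<Longrightarrow> 0 \<le> f x"
  shows "(LINT x:A|M. f x) \<le> (LINT x:B|M. f x)"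
  unfolding set_lebesgue_integral_def
proof (rule integral_mono)
  show "integrable M (\<lambda>x. indicator A x *\<^sub>R f x)"
    using set_integrable_subset[OF assms(1-3)] by (simp add: set_integrable_def)
  show "integrable M (\<lambda>x. indicator B x *\<^sub>R f x)"
    using assms(1) by (simp add: set_integrable_def)
  show "indicator A x *\<^sub>R f x \<le> indicator B x *\<^sub>R f x" for x
    using assms(3,4) by (auto simp: indicator_def)
qed

lemma interval_integral_nonneg:
  fixes f :: "real \<Rightarrow> real"
  shows "a \<le> b \<Longrightarrow> (\<And>t. t \<in> {a..b} \<Longrightarrow> 0 \<le> f t) \<Longrightarrow> 0 \<le> (LBINT t=a..b. f t)"
  by (auto simp: interval_integral_Icc set_lebesgue_integral_def indicator_def intro!: integral_nonneg_AE)

(* In LBINT x=0..b the lower bound is the numeral 0 of the extended reals, which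
   interval_integral_Icc (stated for ereal a) does not match. *)
lemma interval_integral_Icc_0: "0 \<le> b \<Longrightarrow> (LBINT x=0..b. f x) = (LINT x:{0..b}|lborel. f x)"
  using interval_integral_Icc[of 0 b f] by (simp add: zero_ereal_def)

lemma square_le_mult_if_quadratic_nonneg:
  fixes a b c :: real
  assumes "0 \<le> a" and nonneg: "\<And>l. 0 \<le> l^2 * a - 2 * l * c + b"
  shows "c^2 \<le> a * b"
proof (cases "a = 0")
  case True
  have "c = 0"
  proof (rule ccontr)
    assume "c \<noteq> 0"
    then have "l^2 * a - 2 * l * c + b = -1" if "l = (b + 1) / (2 * c)" for l
      using True that by (simp add: field_simps)
    then show False
      using nonneg[of "(b + 1) / (2 * c)"] by simp
  qed
  then show ?thesis
    using True by simp
next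
  case False
  then have "0 < a"
    using assms(1) by simp
  have "0 \<le> (c / a)^2 * a - 2 * (c / a) * c + b"
    by (rule nonneg)
  also have "\<dots> = b - c^2 / a"
    using \<open>0 < a\<close> by (simp add: field_simps power2_eq_square)
  finally show ?thesis
    using \<open>0 < a\<close> by (simp add: field_simps mult.commute)
qed

lemma Cauchy_Schwarz_set_integral2:
  fixes u1 u2 v1 v2 :: "'a \<Rightarrow> real"
  assumes "set_borel_measurable M A u1" "set_borel_measurable M A u2"
    and "set_borel_measurable M A v1" "set_borel_measurable M A v2"
    and "set_integrable M A (\<lambda>x. (u1 x)^2)" "set_integrable M A (\<lambda>x. (u2 x)^2)"
    and "set_integrable M A (\<lambda>x. (v1 x)^2)" "set_integrable M A (\<lambda>x. (v2 x)^2)"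
  shows "(LINT x:A|M. u1 x * v1 x + u2 x * v2 x)^2
       \<le> (LINT x:A|M. (u1 x)^2 + (u2 x)^2) * (LINT x:A|M. (v1 x)^2 + (v2 x)^2)"
proof (rule square_le_mult_if_quadratic_nonneg)
  show "0 \<le> (LINT x:A|M. (u1 x)^2 + (u2 x)^2)"
    unfolding set_lebesgue_integral_def by (rule integral_nonneg_AE) auto
  have "set_integrable M A (\<lambda>x. u1 x * v1 x + u2 x * v2 x)"
    using assms by (intro set_integral_add(1) set_integrable_mult_if_square_integrable)
  moreover have "set_integrable M A (\<lambda>x. (u1 x)^2 + (u2 x)^2)" "set_integrable M A (\<lambda>x. (v1 x)^2 + (v2 x)^2)"
    using assms by (auto intro: set_integral_add(1))
  ultimately have expand:
    "(LINT x:A|M. l^2 * ((u1 x)^2 + (u2 x)^2) - 2 * l * (u1 x * v1 x + u2 x * v2 x) + ((v1 x)^2 + (v2 x)^2))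
     = l^2 * (LINT x:A|M. (u1 x)^2 + (u2 x)^2) - 2 * l * (LINT x:A|M. u1 x * v1 x + u2 x * v2 x)
       + (LINT x:A|M. (v1 x)^2 + (v2 x)^2)" for l
    by (simp add: set_integral_add set_integral_diff)
  have nonneg: "0 \<le> (LINT x:A|M. l^2 * ((u1 x)^2 + (u2 x)^2) - 2 * l * (u1 x * v1 x + u2 x * v2 x)
                                     + ((v1 x)^2 + (v2 x)^2))" for l
  proof -
    have "l^2 * ((u1 x)^2 + (u2 x)^2) - 2 * l * (u1 x * v1 x + u2 x * v2 x) + ((v1 x)^2 + (v2 x)^2)
        = (l * u1 x - v1 x)^2 + (l * u2 x - v2 x)^2" for x
      by (simp add: power2_eq_square algebra_simps)
    then show ?thesis
      unfolding set_lebesgue_integral_def by (auto intro!: integral_nonneg_AE)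
  qed
  show "0 \<le> l^2 * (LINT x:A|M. (u1 x)^2 + (u2 x)^2) - 2 * l * (LINT x:A|M. u1 x * v1 x + u2 x * v2 x)
                      + (LINT x:A|M. (v1 x)^2 + (v2 x)^2)" for l
    using nonneg[of l] unfolding expand .
qed

corollary Cauchy_Schwarz_set_integral:
  fixes u v :: "'a \<Rightarrow> real"
  assumes "set_borel_measurable M A u" "set_borel_measurable M A v"
    and "set_integrable M A (\<lambda>x. (u x)^2)" "set_integrable M A (\<lambda>x. (v x)^2)"
  shows "(LINT x:A|M. u x * v x)^2 \<le> (LINT x:A|M. (u x)^2) * (LINT x:A|M. (v x)^2)"
  using Cauchy_Schwarz_set_integral2[of M A u "\<lambda>_. 0" v "\<lambda>_. 0"] assms
  by (simp add: set_borel_measurable_def set_integrable_def)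

section \<open>Absolutely continuous functions\<close>

lemma integral_mult_eq_split_diagonal:
  fixes f g :: "real \<Rightarrow> real"
  assumes f: "integrable lborel f" and g: "integrable lborel g"
  shows "(LINT t|lborel. f t) * (LINT s|lborel. g s)
       = (LINT t|lborel. f t * (LINT s|lborel. (if s \<le> t then g s else 0)))
       + (LINT s|lborel. g s * (LINT t|lborel. (if t < s then f t else 0)))"
proof -
  have [measurable]: "f \<in> borel_measurable borel" "g \<in> borel_measurable borel"
    using borel_measurable_integrable[OF f] borel_measurable_integrable[OF g] by simp_all
  define \<phi> where "\<phi> = (\<lambda>(t::real, s::real). f t * g s)"
  define \<phi>1 where "\<phi>1 = (\<lambda>(t::real, s::real). if s \<le> t then f t * g s else 0)"
  define \<phi>2 where "\<phi>2 = (\<lambda>(t::real, s::real). if t < s then f t * g s else 0)"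
  have [measurable]: "\<phi> \<in> borel_measurable (lborel \<Otimes>\<^sub>M lborel)"
    "\<phi>1 \<in> borel_measurable (lborel \<Otimes>\<^sub>M lborel)" "\<phi>2 \<in> borel_measurable (lborel \<Otimes>\<^sub>M lborel)"
    unfolding \<phi>_def \<phi>1_def \<phi>2_def by measurable
  have int_\<phi>: "integrable (lborel \<Otimes>\<^sub>M lborel) \<phi>"
  proof (rule lborel_pair.Fubini_integrable)
    show "integrable lborel (\<lambda>t. LINT s|lborel. norm (\<phi> (t, s)))"
      using f by (simp add: \<phi>_def abs_mult)
    show "AE t in lborel. integrable lborel (\<lambda>s. \<phi> (t, s))"
      using g by (simp add: \<phi>_def)
  qed measurable
  have factor: "(if s \<le> t then f t * g s else 0) = f t * (if s \<le> t then g s else 0)"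
    "(if t < s then f t * g s else 0) = g s * (if t < s then f t else 0)" for s t :: real
    by simp_all
  have int_\<phi>12: "integrable (lborel \<Otimes>\<^sub>M lborel) \<phi>1" "integrable (lborel \<Otimes>\<^sub>M lborel) \<phi>2"
    by (auto intro!: Bochner_Integration.integrable_bound[OF int_\<phi>] simp: \<phi>1_def \<phi>2_def \<phi>_def)
  have "\<phi> = (\<lambda>p. \<phi>1 p + \<phi>2 p)"
    by (auto simp: \<phi>1_def \<phi>2_def \<phi>_def fun_eq_iff)
  then have "integral\<^sup>L (lborel \<Otimes>\<^sub>M lborel) \<phi>
      = integral\<^sup>L (lborel \<Otimes>\<^sub>M lborel) \<phi>1 + integral\<^sup>L (lborel \<Otimes>\<^sub>M lborel) \<phi>2"
    using int_\<phi>12 by simp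
  moreover have "integral\<^sup>L (lborel \<Otimes>\<^sub>M lborel) \<phi> = (LINT t|lborel. f t) * (LINT s|lborel. g s)"
    using lborel_pair.integral_fst'[OF int_\<phi>] by (simp add: \<phi>_def)
  moreover have "integral\<^sup>L (lborel \<Otimes>\<^sub>M lborel) \<phi>1
      = (LINT t|lborel. f t * (LINT s|lborel. (if s \<le> t then g s else 0)))"
    using lborel_pair.integral_fst'[OF int_\<phi>12(1)] by (simp add: \<phi>1_def factor)
  moreover have "integral\<^sup>L (lborel \<Otimes>\<^sub>M lborel) \<phi>2
      = (LINT s|lborel. g s * (LINT t|lborel. (if t < s then f t else 0)))"
    using lborel_pair.integral_snd[of "\<lambda>t s. \<phi>2 (t, s)"] int_\<phi>12(2) by (simp add: \<phi>2_def factor)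
  ultimately show ?thesis
    by simp
qed

lemma interval_integral_mult_eq_split_diagonal:
  fixes f g :: "real \<Rightarrow> real"
  assumes "a \<le> b" "set_integrable lborel {a..b} f" "set_integrable lborel {a..b} g"
  shows "(LBINT t=a..b. f t) * (LBINT t=a..b. g t)
       = (LBINT t=a..b. f t * (LBINT s=a..t. g s)) + (LBINT t=a..b. g t * (LBINT s=a..t. f s))"
proof -
  define f0 where "f0 = (\<lambda>t. indicator {a..b} t * f t)"
  define g0 where "g0 = (\<lambda>t. indicator {a..b} t * g t)"
  have "integrable lborel f0" "integrable lborel g0"
    using assms(2,3) by (simp_all add: set_integrable_def f0_def g0_def)
  note split = integral_mult_eq_split_diagonal[OF this]
  have "(LINT s|lborel. (if s \<le> t then g0 s else 0)) = (LBINT s=a..t. g s)" if "t \<in> {a..b}" for t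
  proof -
    have "(\<lambda>s. if s \<le> t then g0 s else 0) = (\<lambda>s. indicator {a..t} s * g s)"
      using that by (auto simp: g0_def indicator_def)
    then show ?thesis
      using that by (simp add: interval_integral_Icc set_lebesgue_integral_def)
  qed
  moreover have "(LINT s|lborel. (if s < t then f0 s else 0)) = (LBINT s=a..t. f s)" if "t \<in> {a..b}" for t
  proof -
    have "(\<lambda>s. if s < t then f0 s else 0) = (\<lambda>s. indicator {a..<t} s * f s)"
      using that by (auto simp: f0_def indicator_def)
    then show ?thesis
      using that by (simp add: interval_integral_Ico set_lebesgue_integral_def)
  qed
  ultimately have inner: "f0 t * (LINT s|lborel. (if s \<le> t then g0 s else 0))
      = indicator {a..b} t * (f t * (LBINT s=a..t. g s))"
    "g0 t * (LINT s|lborel. (if s < t then f0 s else 0))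
      = indicator {a..b} t * (g t * (LBINT s=a..t. f s))" for t
    by (auto simp: f0_def g0_def split: split_indicator)
  have outer: "(LBINT t=a..b. h t) = (LINT t|lborel. indicator {a..b} t * h t)" for h :: "real \<Rightarrow> real"
    using assms(1) by (simp add: interval_integral_Icc set_lebesgue_integral_def)
  show ?thesis
    unfolding outer using split[unfolded inner] by (simp add: f0_def g0_def)
qed

lemma continuous_on_interval_integral:
  fixes f :: "real \<Rightarrow> real"
  assumes f: "set_integrable lborel {a..b} f"
  shows "continuous_on {a..b} (\<lambda>t. LBINT s=a..t. f s)"
proof -
  have "continuous_on {a..b} (\<lambda>t. integral {a..t} f)"
    using set_borel_integral_eq_integral(1)[OF f] by (rule indefinite_integral_continuous_1)
  moreover have "integral {a..t} f = (LBINT s=a..t. f s)" if "t \<in> {a..b}" for t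
  proof -
    have "set_integrable lborel {a..t} f"
      using that by (intro set_integrable_subset[OF f]) auto
    then show ?thesis
      using that by (simp add: interval_integral_Icc set_borel_integral_eq_integral(2))
  qed
  ultimately show ?thesis
    by (rule continuous_on_eq)
qed

definition has_ac_deriv_on :: "(real \<Rightarrow> real) \<Rightarrow> (real \<Rightarrow> real) \<Rightarrow> real \<Rightarrow> real \<Rightarrow> bool" where
  "has_ac_deriv_on F f a b \<longleftrightarrow>
     set_integrable lborel {a..b} f \<and> (\<forall>t\<in>{a..b}. F t = F a + (LBINT s=a..t. f s))"

lemma has_ac_deriv_onI:
  assumes "set_integrable lborel {a..b} f" "\<And>t. t \<in> {a..b} \<Longrightarrow> F t = F a + (LBINT s=a..t. f s)"
  shows "has_ac_deriv_on F f a b"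
  using assms unfolding has_ac_deriv_on_def by blast

lemma has_ac_deriv_on_integrable:
  "has_ac_deriv_on F f a b \<Longrightarrow> set_integrable lborel {a..b} f"
  unfolding has_ac_deriv_on_def by blast

lemma has_ac_deriv_onD:
  "has_ac_deriv_on F f a b \<Longrightarrow> t \<in> {a..b} \<Longrightarrow> F t = F a + (LBINT s=a..t. f s)"
  unfolding has_ac_deriv_on_def by blast

lemma has_ac_deriv_on_integral_eq:
  assumes "has_ac_deriv_on F f a b" "a \<le> b"
  shows "(LBINT s=a..b. f s) = F b - F a"
  using has_ac_deriv_onD[OF assms(1), of b] assms(2) by simp

lemma has_ac_deriv_on_continuous_on:
  fixes F f :: "real \<Rightarrow> real"
  assumes "has_ac_deriv_on F f a b"
  shows "continuous_on {a..b} F"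
proof -
  have "continuous_on {a..b} (\<lambda>t. F a + (LBINT s=a..t. f s))"
    using continuous_on_interval_integral[OF has_ac_deriv_on_integrable[OF assms]]
    by (intro continuous_intros)
  then show ?thesis
    by (rule continuous_on_eq) (simp add: has_ac_deriv_onD[OF assms, symmetric])
qed

lemma has_ac_deriv_on_integral_upto:
  "set_integrable lborel {a..b} f \<Longrightarrow> has_ac_deriv_on (\<lambda>t. LBINT s=a..t. f s) f a b"
  by (rule has_ac_deriv_onI) simp_all

lemma has_ac_deriv_on_integral_from:
  fixes f :: "real \<Rightarrow> real"
  assumes f: "set_integrable lborel {a..b} f"
  shows "has_ac_deriv_on (\<lambda>t. LBINT s=t..b. f s) (\<lambda>s. - f s) a b"
proof (rule has_ac_deriv_onI)
  show "set_integrable lborel {a..b} (\<lambda>s. - f s)"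
    using f by (simp add: set_integrable_def)
  fix t assume t: "t \<in> {a..b}"
  have "interval_lebesgue_integrable lborel a b f"
    using t by (auto simp: interval_lebesgue_integrable_def intro!: set_integrable_subset[OF f])
  then have "(LBINT s=a..t. f s) + (LBINT s=t..b. f s) = (LBINT s=a..b. f s)"
    using t by (intro interval_integral_sum) (simp add: min_def max_def)
  then show "(LBINT s=t..b. f s) = (LBINT s=a..b. f s) + (LBINT s=a..t. - f s)"
    by (simp add: interval_lebesgue_integral_uminus)
qed

lemma has_ac_deriv_on_cong:
  assumes "has_ac_deriv_on F f a b"
    and "\<And>t. t \<in> {a..b} \<Longrightarrow> F t = G t" "\<And>t. t \<in> {a..b} \<Longrightarrow> f t = g t"
  shows "has_ac_deriv_on G g a b"
proof (rule has_ac_deriv_onI)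
  show "set_integrable lborel {a..b} g"
    using set_integrable_cong[OF refl refl assms(3)] has_ac_deriv_on_integrable[OF assms(1)] by (rule iffD1)
  fix t assume t: "t \<in> {a..b}"
  have "G t = F t"
    using assms(2)[OF t] by simp
  also have "\<dots> = F a + (LBINT s=a..t. f s)"
    using assms(1) t by (rule has_ac_deriv_onD)
  also have "F a = G a"
    using assms(2) t by simp
  also have "(LBINT s=a..t. f s) = (LBINT s=a..t. g s)"
    using t by (intro interval_integral_cong assms(3)) (auto simp: einterval_iff)
  finally show "G t = G a + (LBINT s=a..t. g s)" .
qed

lemma has_ac_deriv_on_add:
  assumes F: "has_ac_deriv_on F f a b" and G: "has_ac_deriv_on G g a b"
  shows "has_ac_deriv_on (\<lambda>t. F t + G t) (\<lambda>t. f t + g t) a b"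
proof (rule has_ac_deriv_onI)
  note f = has_ac_deriv_on_integrable[OF F] and g = has_ac_deriv_on_integrable[OF G]
  from f g show "set_integrable lborel {a..b} (\<lambda>t. f t + g t)"
    by (rule set_integral_add(1))
  fix t assume t: "t \<in> {a..b}"
  have "set_integrable lborel {a..t} f" "set_integrable lborel {a..t} g"
    using t by (auto intro!: set_integrable_subset[OF f] set_integrable_subset[OF g])
  then have "(LBINT s=a..t. f s + g s) = (LBINT s=a..t. f s) + (LBINT s=a..t. g s)"
    using t by (simp add: interval_integral_Icc)
  then show "F t + G t = F a + G a + (LBINT s=a..t. f s + g s)"
    using has_ac_deriv_onD[OF F t] has_ac_deriv_onD[OF G t] by simp
qed

lemma has_ac_deriv_on_diff:
  assumes F: "has_ac_deriv_on F f a b" and G: "has_ac_deriv_on G g a b"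
  shows "has_ac_deriv_on (\<lambda>t. F t - G t) (\<lambda>t. f t - g t) a b"
proof (rule has_ac_deriv_onI)
  note f = has_ac_deriv_on_integrable[OF F] and g = has_ac_deriv_on_integrable[OF G]
  from f g show "set_integrable lborel {a..b} (\<lambda>t. f t - g t)"
    by (rule set_integral_diff(1))
  fix t assume t: "t \<in> {a..b}"
  have "set_integrable lborel {a..t} f" "set_integrable lborel {a..t} g"
    using t by (auto intro!: set_integrable_subset[OF f] set_integrable_subset[OF g])
  then have "(LBINT s=a..t. f s - g s) = (LBINT s=a..t. f s) - (LBINT s=a..t. g s)"
    using t by (simp add: interval_integral_Icc)
  then show "F t - G t = F a - G a + (LBINT s=a..t. f s - g s)"
    using has_ac_deriv_onD[OF F t] has_ac_deriv_onD[OF G t] by simp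
qed

lemma has_ac_deriv_on_mult:
  fixes F G f g :: "real \<Rightarrow> real"
  assumes F: "has_ac_deriv_on F f a b" and G: "has_ac_deriv_on G g a b"
  shows "has_ac_deriv_on (\<lambda>t. F t * G t) (\<lambda>t. f t * G t + F t * g t) a b"
proof (rule has_ac_deriv_onI)
  note f = has_ac_deriv_on_integrable[OF F] and g = has_ac_deriv_on_integrable[OF G]
  have "set_integrable lborel {a..b} (\<lambda>t. f t * G t)"
    using set_integrable_mult_continuous_on[OF f has_ac_deriv_on_continuous_on[OF G]]
    by (simp add: mult.commute)
  moreover have "set_integrable lborel {a..b} (\<lambda>t. F t * g t)"
    using g has_ac_deriv_on_continuous_on[OF F] by (rule set_integrable_mult_continuous_on)
  ultimately show "set_integrable lborel {a..b} (\<lambda>t. f t * G t + F t * g t)"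
    by (rule set_integral_add(1))
  fix t assume t: "t \<in> {a..b}"
  then have "a \<le> t" and sub: "{a..t} \<subseteq> {a..b}"
    by auto
  have f_t: "set_integrable lborel {a..t} f" and g_t: "set_integrable lborel {a..t} g"
    by (rule set_integrable_subset[OF f _ sub] set_integrable_subset[OF g _ sub], simp)+
  define If where "If = (\<lambda>x::real. LBINT s=a..x. f s)"
  define Ig where "Ig = (\<lambda>x::real. LBINT s=a..x. g s)"
  have F_eq: "F x = F a + If x" and G_eq: "G x = G a + Ig x" if "x \<in> {a..t}" for x
    using has_ac_deriv_onD[OF F, of x] has_ac_deriv_onD[OF G, of x] that sub
    unfolding If_def Ig_def by auto
  have fIg: "set_integrable lborel {a..t} (\<lambda>s. f s * Ig s)"
    and gIf: "set_integrable lborel {a..t} (\<lambda>s. g s * If s)"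
    using set_integrable_mult_continuous_on[OF f_t continuous_on_interval_integral[OF g_t]]
      set_integrable_mult_continuous_on[OF g_t continuous_on_interval_integral[OF f_t]]
    by (simp_all add: If_def Ig_def mult.commute)
  have "f x * G x + F x * g x = G a * f x + F a * g x + f x * Ig x + g x * If x" if "x \<in> {a..t}" for x
    using F_eq[OF that] G_eq[OF that] by (simp add: algebra_simps)
  then have "(LBINT s=a..t. f s * G s + F s * g s)
      = (LBINT s=a..t. G a * f s + F a * g s + f s * Ig s + g s * If s)"
    using \<open>a \<le> t\<close> by (intro interval_integral_cong) (auto simp: einterval_iff)
  also have "\<dots> = G a * If t + F a * Ig t + ((LBINT s=a..t. f s * Ig s) + (LBINT s=a..t. g s * If s))"
    using f_t g_t fIg gIf \<open>a \<le> t\<close> by (simp add: interval_integral_Icc If_def Ig_def)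
  also have "(LBINT s=a..t. f s * Ig s) + (LBINT s=a..t. g s * If s) = If t * Ig t"
    using interval_integral_mult_eq_split_diagonal[OF \<open>a \<le> t\<close> f_t g_t] by (simp add: If_def Ig_def)
  also have "G a * If t + F a * Ig t + If t * Ig t = F t * G t - F a * G a"
    using F_eq[of t] G_eq[of t] \<open>a \<le> t\<close> by (simp add: algebra_simps)
  finally show "F t * G t = F a * G a + (LBINT s=a..t. f s * G s + F s * g s)"
    by simp
qed

lemma has_ac_deriv_on_if_has_real_derivative:
  fixes F f :: "real \<Rightarrow> real"
  assumes deriv: "\<And>t. t \<in> {a..b} \<Longrightarrow> (F has_real_derivative f t) (at t within {a..b})"
    and cont: "continuous_on {a..b} f"
  shows "has_ac_deriv_on F f a b"
proof (rule has_ac_deriv_onI)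
  show "set_integrable lborel {a..b} f"
    using cont by (rule borel_integrable_atLeastAtMost')
  fix t assume t: "t \<in> {a..b}"
  then have sub: "{min a t..max a t} \<subseteq> {a..b}"
    by auto
  have "(LBINT s=a..t. f s) = F t - F a"
  proof (rule interval_integral_FTC_finite)
    show "continuous_on {min a t..max a t} f"
      using cont sub by (rule continuous_on_subset)
    show "(F has_vector_derivative f x) (at x within {min a t..max a t})"
      if "min a t \<le> x" "x \<le> max a t" for x
      using has_field_derivative_subset[OF deriv sub] that sub
      by (auto simp: has_real_derivative_iff_has_vector_derivative)
  qed
  then show "F t = F a + (LBINT s=a..t. f s)"
    by simp
qed

lemma has_ac_deriv_on_rotation:
  fixes U V u v :: "real \<Rightarrow> real"
  assumes U: "has_ac_deriv_on U u a b" and V: "has_ac_deriv_on V v a b"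
  shows "has_ac_deriv_on (\<lambda>t. cos (c * t) * U t + sin (c * t) * V t)
      (\<lambda>t. - c * (sin (c * t) * U t - cos (c * t) * V t) + (cos (c * t) * u t + sin (c * t) * v t)) a b"
    and "has_ac_deriv_on (\<lambda>t. sin (c * t) * U t - cos (c * t) * V t)
      (\<lambda>t. c * (cos (c * t) * U t + sin (c * t) * V t) + (sin (c * t) * u t - cos (c * t) * v t)) a b"
proof -
  have cos: "has_ac_deriv_on (\<lambda>t. cos (c * t)) (\<lambda>t. - c * sin (c * t)) a b"
    and sin: "has_ac_deriv_on (\<lambda>t. sin (c * t)) (\<lambda>t. c * cos (c * t)) a b"
    by (auto intro!: has_ac_deriv_on_if_has_real_derivative derivative_eq_intros continuous_intros)
  show "has_ac_deriv_on (\<lambda>t. cos (c * t) * U t + sin (c * t) * V t)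
      (\<lambda>t. - c * (sin (c * t) * U t - cos (c * t) * V t) + (cos (c * t) * u t + sin (c * t) * v t)) a b"
    by (rule has_ac_deriv_on_cong[OF has_ac_deriv_on_add[OF has_ac_deriv_on_mult[OF cos U]
          has_ac_deriv_on_mult[OF sin V]]]) (simp_all add: algebra_simps)
  show "has_ac_deriv_on (\<lambda>t. sin (c * t) * U t - cos (c * t) * V t)
      (\<lambda>t. c * (cos (c * t) * U t + sin (c * t) * V t) + (sin (c * t) * u t - cos (c * t) * v t)) a b"
    by (rule has_ac_deriv_on_cong[OF has_ac_deriv_on_diff[OF has_ac_deriv_on_mult[OF sin U]
          has_ac_deriv_on_mult[OF cos V]]]) (simp_all add: algebra_simps)
qed

lemma interval_integral_cos_sin_diff:
  fixes g h :: "real \<Rightarrow> real"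
  assumes "a \<le> b" and g: "set_integrable lborel {a..b} g" and h: "set_integrable lborel {a..b} h"
  shows "(LBINT s=a..b. cos (c * (t - s)) * g s + sin (c * (t - s)) * h s)
       = cos (c * t) * (LBINT s=a..b. cos (c * s) * g s - sin (c * s) * h s)
       + sin (c * t) * (LBINT s=a..b. sin (c * s) * g s + cos (c * s) * h s)"
proof -
  have "cos (c * (t - s)) * g s + sin (c * (t - s)) * h s
      = cos (c * t) * (cos (c * s) * g s - sin (c * s) * h s)
      + sin (c * t) * (sin (c * s) * g s + cos (c * s) * h s)" for s
    by (simp add: right_diff_distrib cos_diff sin_diff algebra_simps)
  moreover have "set_integrable lborel {a..b} (\<lambda>s. cos (c * s) * g s - sin (c * s) * h s)"
    "set_integrable lborel {a..b} (\<lambda>s. sin (c * s) * g s + cos (c * s) * h s)"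
    by (intro set_integral_add(1) set_integral_diff(1) set_integrable_mult_continuous_on g h
        continuous_intros)+
  ultimately show ?thesis
    using \<open>a \<le> b\<close> by (simp add: interval_integral_Icc)
qed

section \<open>The spaces L2 and H1 on an interval\<close>

lemma L2_on_set_integrable: "L2_on T f \<Longrightarrow> set_integrable lborel {0..T} f"
  unfolding L2_on_def by (rule set_integrable_if_square_integrable) (simp_all add: emeasure_lborel_Icc_eq)

lemma L2_on_subinterval:
  assumes "L2_on T f" "t \<le> T"
  shows "L2_on t f"
proof -
  have sub: "{0..t} \<subseteq> {0..T}"
    using assms(2) by auto
  then show ?thesis
    using assms(1) unfolding L2_on_def
    by (auto intro!: set_borel_measurable_subset[OF _ _ sub] set_integrable_subset[OF _ _ sub])
qed

lemma L2_on_continuous_on: "continuous_on {0..T} f \<Longrightarrow> L2_on T f"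
  unfolding L2_on_def
  by (auto intro!: set_borel_measurable_continuous_on borel_integrable_atLeastAtMost' continuous_intros)

lemma L2_on_diff:
  assumes f: "L2_on T f" and g: "L2_on T g"
  shows "L2_on T (\<lambda>t. f t - g t)"
  unfolding L2_on_def
proof
  have mf: "set_borel_measurable lborel {0..T} f" and mg: "set_borel_measurable lborel {0..T} g"
    using f g by (simp_all add: L2_on_def)
  then show "set_borel_measurable lborel {0..T} (\<lambda>t. f t - g t)"
    unfolding set_borel_measurable_def by (simp add: right_diff_distrib borel_measurable_diff)
  have "(\<lambda>t. (f t - g t)^2) = (\<lambda>t. (f t)^2 + (g t)^2 - 2 * (f t * g t))"
    by (simp add: power2_eq_square algebra_simps)
  moreover have "set_integrable lborel {0..T} (\<lambda>t. f t * g t)"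
    using f g unfolding L2_on_def by (intro set_integrable_mult_if_square_integrable) auto
  ultimately show "set_integrable lborel {0..T} (\<lambda>t. (f t - g t)^2)"
    using f g unfolding L2_on_def by (auto intro!: set_integral_diff(1) set_integral_add(1))
qed

lemma L2_norm_sq:
  assumes "0 \<le> T"
  shows "(L2_norm T f)^2 = (LBINT t=0..T. (f t)^2)" and "0 \<le> L2_norm T f"
proof -
  have "0 \<le> (LBINT t=0..T. (f t)^2)"
    using interval_integral_nonneg[OF assms, folded zero_ereal_def] by simp
  then show "(L2_norm T f)^2 = (LBINT t=0..T. (f t)^2)" and "0 \<le> L2_norm T f"
    by (simp_all add: L2_norm_def)
qed

lemma H1_deriv_iff: "H1_deriv T v v' \<longleftrightarrow> L2_on T v' \<and> has_ac_deriv_on v v' 0 T"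
  unfolding H1_deriv_def has_ac_deriv_on_def zero_ereal_def using L2_on_set_integrable by blast

lemma H10_has_ac_deriv_on: "H10 T w w' \<Longrightarrow> has_ac_deriv_on w w' 0 T"
  and H10_L2_on: "H10 T w w' \<Longrightarrow> L2_on T w'"
  by (simp_all add: H10_def H1_deriv_iff)

lemma H1mu_norm_sq:
  assumes "0 \<le> T" "0 \<le> \<mu>"
  shows "(H1mu_norm T \<mu> w w')^2 = (LBINT t=0..T. (w' t)^2) + \<mu> * (LBINT t=0..T. (w t)^2)"
    and "0 \<le> H1mu_norm T \<mu> w w'"
proof -
  have "0 \<le> (LBINT t=0..T. (w' t)^2) + \<mu> * (LBINT t=0..T. (w t)^2)"
    using interval_integral_nonneg[OF assms(1), folded zero_ereal_def] assms(2) by simp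
  then show "(H1mu_norm T \<mu> w w')^2 = (LBINT t=0..T. (w' t)^2) + \<mu> * (LBINT t=0..T. (w t)^2)"
    and "0 \<le> H1mu_norm T \<mu> w w'"
    by (simp_all add: H1mu_norm_def)
qed

section \<open>The operators T_mu and S_mu\<close>

definition S_mu :: "real \<Rightarrow> real \<Rightarrow> (real \<Rightarrow> real) \<Rightarrow> (real \<Rightarrow> real) \<Rightarrow> real \<Rightarrow> real" where
  "S_mu T \<mu> w w' t = (LBINT s=t..T. sin (sqrt \<mu> * (t - s)) * w' s
                                    + sqrt \<mu> * cos (sqrt \<mu> * (t - s)) * w s)"

lemma T_mu_end: "T_mu T \<mu> w w' T = 0" and S_mu_end: "S_mu T \<mu> w w' T = 0"
  by (simp_all add: T_mu_def S_mu_def)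

lemma Cf_0: "Cf \<mu> f 0 = 0" and Sf_0: "Sf \<mu> f 0 = 0"
  by (simp_all add: Cf_def Sf_def zero_ereal_def)

lemma T_mu_S_mu_rotation:
  fixes w w' :: "real \<Rightarrow> real" and \<mu> :: real
  assumes w: "has_ac_deriv_on w w' 0 T" and t: "t \<in> {0..T}"
  defines "p \<equiv> \<lambda>s. cos (sqrt \<mu> * s) * w' s + sqrt \<mu> * sin (sqrt \<mu> * s) * w s"
    and "q \<equiv> \<lambda>s. sin (sqrt \<mu> * s) * w' s - sqrt \<mu> * cos (sqrt \<mu> * s) * w s"
  shows "T_mu T \<mu> w w' t = cos (sqrt \<mu> * t) * (LBINT s=t..T. p s) + sin (sqrt \<mu> * t) * (LBINT s=t..T. q s)"
    and "S_mu T \<mu> w w' t = sin (sqrt \<mu> * t) * (LBINT s=t..T. p s) - cos (sqrt \<mu> * t) * (LBINT s=t..T. q s)"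
proof -
  define c where "c = sqrt \<mu>"
  have sub: "{t..T} \<subseteq> {0..T}" and "t \<le> T"
    using t by auto
  have w': "set_integrable lborel {t..T} w'"
    by (rule set_integrable_subset[OF has_ac_deriv_on_integrable[OF w] _ sub]) simp
  have cw: "set_integrable lborel {t..T} (\<lambda>s. c * w s)"
    and ncw: "set_integrable lborel {t..T} (\<lambda>s. - (c * w s))"
    by (intro borel_integrable_atLeastAtMost' continuous_intros
        continuous_on_subset[OF has_ac_deriv_on_continuous_on[OF w] sub])+
  have "T_mu T \<mu> w w' t = (LBINT s=t..T. cos (c * (t - s)) * w' s + sin (c * (t - s)) * - (c * w s))"
    unfolding T_mu_def c_def by (simp add: algebra_simps)
  also have "\<dots> = cos (c * t) * (LBINT s=t..T. p s) + sin (c * t) * (LBINT s=t..T. q s)"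
    using interval_integral_cos_sin_diff[OF \<open>t \<le> T\<close> w' ncw, where c = c and t = t]
    by (simp add: p_def q_def c_def algebra_simps)
  finally show "T_mu T \<mu> w w' t = cos (sqrt \<mu> * t) * (LBINT s=t..T. p s) + sin (sqrt \<mu> * t) * (LBINT s=t..T. q s)"
    by (simp add: c_def)
  have "S_mu T \<mu> w w' t = (LBINT s=t..T. cos (c * (t - s)) * (c * w s) + sin (c * (t - s)) * w' s)"
    unfolding S_mu_def c_def by (simp add: algebra_simps)
  also have "\<dots> = cos (c * t) * (LBINT s=t..T. - q s) + sin (c * t) * (LBINT s=t..T. p s)"
    using interval_integral_cos_sin_diff[OF \<open>t \<le> T\<close> cw w', where c = c and t = t]
    by (simp add: p_def q_def c_def algebra_simps)
  finally show "S_mu T \<mu> w w' t = sin (sqrt \<mu> * t) * (LBINT s=t..T. p s) - cos (sqrt \<mu> * t) * (LBINT s=t..T. q s)"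
    by (simp add: c_def interval_lebesgue_integral_uminus)
qed

lemma T_mu_S_mu_has_ac_deriv:
  fixes w w' :: "real \<Rightarrow> real"
  assumes w: "has_ac_deriv_on w w' 0 T"
  shows "has_ac_deriv_on (T_mu T \<mu> w w') (\<lambda>t. - sqrt \<mu> * S_mu T \<mu> w w' t - w' t) 0 T"
    and "has_ac_deriv_on (S_mu T \<mu> w w') (\<lambda>t. sqrt \<mu> * (T_mu T \<mu> w w' t - w t)) 0 T"
proof -
  define c where "c = sqrt \<mu>"
  define p where "p = (\<lambda>s. cos (c * s) * w' s + c * sin (c * s) * w s)"
  define q where "q = (\<lambda>s. sin (c * s) * w' s - c * cos (c * s) * w s)"
  note rep = T_mu_S_mu_rotation[OF w]
  note w' = has_ac_deriv_on_integrable[OF w] and w_cont = has_ac_deriv_on_continuous_on[OF w]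
  have "set_integrable lborel {0..T} (\<lambda>s. cos (c * s) * w' s)"
    "set_integrable lborel {0..T} (\<lambda>s. sin (c * s) * w' s)"
    by (intro set_integrable_mult_continuous_on w' continuous_intros)+
  moreover have "set_integrable lborel {0..T} (\<lambda>s. c * sin (c * s) * w s)"
    "set_integrable lborel {0..T} (\<lambda>s. c * cos (c * s) * w s)"
    by (intro borel_integrable_atLeastAtMost' continuous_intros w_cont)+
  ultimately have "set_integrable lborel {0..T} p" "set_integrable lborel {0..T} q"
    unfolding p_def q_def by (auto intro: set_integral_add(1) set_integral_diff(1))
  note rot = has_ac_deriv_on_rotation[OF has_ac_deriv_on_integral_from[OF this(1)]
      has_ac_deriv_on_integral_from[OF this(2)], of c]
  have "cos (c * t) * - p t + sin (c * t) * - q t = - ((sin (c * t))^2 + (cos (c * t))^2) * w' t"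
    "sin (c * t) * - p t - cos (c * t) * - q t = - ((sin (c * t))^2 + (cos (c * t))^2) * (c * w t)" for t
    unfolding p_def q_def by algebra+
  then have pq: "cos (c * t) * - p t + sin (c * t) * - q t = - w' t"
    "sin (c * t) * - p t - cos (c * t) * - q t = - (c * w t)" for t
    by simp_all
  show "has_ac_deriv_on (T_mu T \<mu> w w') (\<lambda>t. - sqrt \<mu> * S_mu T \<mu> w w' t - w' t) 0 T"
    by (rule has_ac_deriv_on_cong[OF rot(1)]) (simp_all only: pq(1) rep, simp_all add: c_def p_def q_def)
  show "has_ac_deriv_on (S_mu T \<mu> w w') (\<lambda>t. sqrt \<mu> * (T_mu T \<mu> w w' t - w t)) 0 T"
    by (rule has_ac_deriv_on_cong[OF rot(2)]) (simp_all only: pq(2) rep, simp_all add: c_def p_def q_def algebra_simps)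
qed

lemma Cf_Sf_has_ac_deriv:
  fixes f :: "real \<Rightarrow> real"
  assumes f: "set_integrable lborel {0..T} f"
  shows "has_ac_deriv_on (Cf \<mu> f) (\<lambda>t. f t - sqrt \<mu> * Sf \<mu> f t) 0 T"
    and "has_ac_deriv_on (Sf \<mu> f) (\<lambda>t. sqrt \<mu> * Cf \<mu> f t) 0 T"
proof -
  define c where "c = sqrt \<mu>"
  have "set_integrable lborel {0..T} (\<lambda>s. cos (c * s) * f s)" "set_integrable lborel {0..T} (\<lambda>s. sin (c * s) * f s)"
    using f by (auto intro!: set_integrable_mult_continuous_on continuous_intros)
  note rot = has_ac_deriv_on_rotation[OF has_ac_deriv_on_integral_upto[OF this(1)]
      has_ac_deriv_on_integral_upto[OF this(2)], of c]
  have C_eq: "Cf \<mu> f t = cos (c * t) * (LBINT s=0..t. cos (c * s) * f s) + sin (c * t) * (LBINT s=0..t. sin (c * s) * f s)"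
    and S_eq: "Sf \<mu> f t = sin (c * t) * (LBINT s=0..t. cos (c * s) * f s) - cos (c * t) * (LBINT s=0..t. sin (c * s) * f s)"
    if t: "t \<in> {0..T}" for t
  proof -
    have f_t: "set_integrable lborel {0..t} f"
      using t by (intro set_integrable_subset[OF f]) auto
    have "set_integrable lborel {0..t} (\<lambda>_. 0::real)"
      by (simp add: set_integrable_def)
    show "Cf \<mu> f t = cos (c * t) * (LBINT s=0..t. cos (c * s) * f s) + sin (c * t) * (LBINT s=0..t. sin (c * s) * f s)"
      using interval_integral_cos_sin_diff[of 0 t f "\<lambda>_. 0" c t] t f_t \<open>set_integrable lborel {0..t} (\<lambda>_. 0)\<close>
      by (simp add: Cf_def c_def zero_ereal_def)
    show "Sf \<mu> f t = sin (c * t) * (LBINT s=0..t. cos (c * s) * f s) - cos (c * t) * (LBINT s=0..t. sin (c * s) * f s)"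
      using interval_integral_cos_sin_diff[of 0 t "\<lambda>_. 0" f c t] t f_t \<open>set_integrable lborel {0..t} (\<lambda>_. 0)\<close>
      by (simp add: Sf_def c_def zero_ereal_def interval_lebesgue_integral_uminus)
  qed
  have cs: "cos (c * t) * (cos (c * t) * f t) + sin (c * t) * (sin (c * t) * f t) = f t"
    "sin (c * t) * (cos (c * t) * f t) - cos (c * t) * (sin (c * t) * f t) = 0" for t
  proof -
    have "cos (c * t) * (cos (c * t) * f t) + sin (c * t) * (sin (c * t) * f t)
        = ((sin (c * t))^2 + (cos (c * t))^2) * f t"
      by algebra
    then show "cos (c * t) * (cos (c * t) * f t) + sin (c * t) * (sin (c * t) * f t) = f t"
      by simp
  qed simp
  show "has_ac_deriv_on (Cf \<mu> f) (\<lambda>t. f t - sqrt \<mu> * Sf \<mu> f t) 0 T"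
    by (rule has_ac_deriv_on_cong[OF rot(1)]) (simp_all only: C_eq S_eq cs(1), simp_all add: c_def zero_ereal_def)
  show "has_ac_deriv_on (Sf \<mu> f) (\<lambda>t. sqrt \<mu> * Cf \<mu> f t) 0 T"
    by (rule has_ac_deriv_on_cong[OF rot(2)]) (simp_all only: C_eq S_eq cs(2), simp_all add: c_def zero_ereal_def)
qed

lemma integral_mult_T_mu_eq:
  fixes f w w' :: "real \<Rightarrow> real"
  assumes "0 \<le> T" and f: "set_integrable lborel {0..T} f" and w: "has_ac_deriv_on w w' 0 T"
  shows "(LBINT t=0..T. f t * T_mu T \<mu> w w' t)
       = (LBINT t=0..T. w' t * Cf \<mu> f t + sqrt \<mu> * w t * Sf \<mu> f t)"
proof -
  note TS = T_mu_S_mu_has_ac_deriv[OF w, of \<mu>] and CS = Cf_Sf_has_ac_deriv[OF f, of \<mu>]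
  define Y where "Y = (\<lambda>t. w' t * Cf \<mu> f t + sqrt \<mu> * w t * Sf \<mu> f t)"
  have \<Phi>: "has_ac_deriv_on (\<lambda>t. Cf \<mu> f t * T_mu T \<mu> w w' t + Sf \<mu> f t * S_mu T \<mu> w w' t)
      (\<lambda>t. f t * T_mu T \<mu> w w' t - Y t) 0 T"
    by (rule has_ac_deriv_on_cong[OF has_ac_deriv_on_add[OF has_ac_deriv_on_mult[OF CS(1) TS(1)]
          has_ac_deriv_on_mult[OF CS(2) TS(2)]]]) (simp_all add: Y_def algebra_simps)
  then have "(LBINT t=0..T. f t * T_mu T \<mu> w w' t - Y t) = 0"
    using has_ac_deriv_on_integral_eq[OF _ \<open>0 \<le> T\<close>]
    by (simp add: zero_ereal_def T_mu_end S_mu_end Cf_0 Sf_0)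
  moreover have "set_integrable lborel {0..T} Y"
  proof -
    have "set_integrable lborel {0..T} (\<lambda>t. Cf \<mu> f t * w' t)"
      using has_ac_deriv_on_integrable[OF w] has_ac_deriv_on_continuous_on[OF CS(1)]
      by (rule set_integrable_mult_continuous_on)
    moreover have "set_integrable lborel {0..T} (\<lambda>t. sqrt \<mu> * w t * Sf \<mu> f t)"
      using has_ac_deriv_on_continuous_on[OF w] has_ac_deriv_on_continuous_on[OF CS(2)]
      by (intro borel_integrable_atLeastAtMost' continuous_intros)
    ultimately show ?thesis
      unfolding Y_def by (simp add: mult.commute[of "w' _"])
  qed
  moreover have "set_integrable lborel {0..T} (\<lambda>t. f t * T_mu T \<mu> w w' t)"
    using set_integral_add(1)[OF has_ac_deriv_on_integrable[OF \<Phi>] \<open>set_integrable lborel {0..T} Y\<close>]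
    by simp
  ultimately show ?thesis
    using \<open>0 \<le> T\<close> by (simp add: zero_ereal_def interval_integral_Icc Y_def set_integral_diff(2))
qed

lemma Cf_Sf_squares_le:
  fixes f :: "real \<Rightarrow> real"
  assumes "0 \<le> t" and f: "L2_on t f"
  shows "(Cf \<mu> f t)^2 + (Sf \<mu> f t)^2 \<le> t * (LBINT s=0..t. (f s)^2)"
proof -
  define c where "c = sqrt \<mu>"
  have fm: "set_borel_measurable lborel {0..t} f" and f2: "set_integrable lborel {0..t} (\<lambda>s. (f s)^2)"
    using f by (simp_all add: L2_on_def)
  have cm: "set_borel_measurable lborel {0..t} (\<lambda>s. cos (c * (t - s)))"
    and sm: "set_borel_measurable lborel {0..t} (\<lambda>s. sin (c * (t - s)))"
    and c2: "set_integrable lborel {0..t} (\<lambda>s. (cos (c * (t - s)))^2)"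
    and s2: "set_integrable lborel {0..t} (\<lambda>s. (sin (c * (t - s)))^2)"
    by (intro set_borel_measurable_continuous_on borel_integrable_atLeastAtMost' continuous_intros)+
  note to_set = interval_integral_Icc_0[OF \<open>0 \<le> t\<close>]
  have C: "(Cf \<mu> f t)^2 \<le> (LINT s:{0..t}|lborel. (cos (c * (t - s)))^2) * (LINT s:{0..t}|lborel. (f s)^2)"
    unfolding Cf_def to_set c_def[symmetric] by (rule Cauchy_Schwarz_set_integral[OF cm fm c2 f2])
  have S: "(Sf \<mu> f t)^2 \<le> (LINT s:{0..t}|lborel. (sin (c * (t - s)))^2) * (LINT s:{0..t}|lborel. (f s)^2)"
    unfolding Sf_def to_set c_def[symmetric] by (rule Cauchy_Schwarz_set_integral[OF sm fm s2 f2])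
  have sum: "(LINT s:{0..t}|lborel. (cos (c * (t - s)))^2) + (LINT s:{0..t}|lborel. (sin (c * (t - s)))^2) = t"
  proof -
    have "(LINT s:{0..t}|lborel. (cos (c * (t - s)))^2) + (LINT s:{0..t}|lborel. (sin (c * (t - s)))^2)
        = (LINT s:{0..t}|lborel. 1)"
      using c2 s2 by (simp flip: set_integral_add(2))
    also have "\<dots> = t"
      using interval_integral_Icc[OF \<open>0 \<le> t\<close>, of "\<lambda>_. 1::real"] by simp
    finally show ?thesis .
  qed
  have "(Cf \<mu> f t)^2 + (Sf \<mu> f t)^2
      \<le> ((LINT s:{0..t}|lborel. (cos (c * (t - s)))^2) + (LINT s:{0..t}|lborel. (sin (c * (t - s)))^2))
        * (LINT s:{0..t}|lborel. (f s)^2)"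
    using add_mono[OF C S] by (simp add: distrib_right)
  then show ?thesis
    unfolding sum to_set .
qed

lemma integral_Cf_Sf_squares_le:
  fixes f :: "real \<Rightarrow> real"
  assumes "0 \<le> T" and f: "L2_on T f"
  shows "(LBINT t=0..T. (Cf \<mu> f t)^2 + (Sf \<mu> f t)^2) \<le> T^2 / 2 * (L2_norm T f)^2"
proof -
  define N where "N = (LBINT s=0..T. (f s)^2)"
  note CS = Cf_Sf_has_ac_deriv[OF L2_on_set_integrable[OF f], of \<mu>]
  have "(Cf \<mu> f t)^2 + (Sf \<mu> f t)^2 \<le> t * N" if t: "t \<in> {0..T}" for t
  proof -
    have "0 \<le> t"
      using t by simp
    have "(LBINT s=0..t. (f s)^2) \<le> N"
      using t f unfolding N_def interval_integral_Icc_0[OF \<open>0 \<le> t\<close>] interval_integral_Icc_0[OF \<open>0 \<le> T\<close>] L2_on_def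
      by (intro set_integral_mono_set) auto
    then show ?thesis
      using Cf_Sf_squares_le[of t f \<mu>] L2_on_subinterval[OF f] t
      by (smt (verit, best) atLeastAtMost_iff mult_left_mono)
  qed
  then have "(LBINT t=0..T. (Cf \<mu> f t)^2 + (Sf \<mu> f t)^2) \<le> (LBINT t=0..T. t * N)"
    unfolding interval_integral_Icc_0[OF \<open>0 \<le> T\<close>]
    using has_ac_deriv_on_continuous_on[OF CS(1)] has_ac_deriv_on_continuous_on[OF CS(2)]
    by (intro set_integral_mono borel_integrable_atLeastAtMost' continuous_intros)
  also have "(LBINT t=0..T. t * N) = T^2 / 2 * N"
  proof -
    have "(LBINT t=ereal 0..ereal T. t * N) = T^2 / 2 * N - 0^2 / 2 * N"
      by (intro interval_integral_FTC_finite)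
        (auto intro!: continuous_intros derivative_eq_intros
          simp: has_real_derivative_iff_has_vector_derivative[symmetric])
    then show ?thesis
      by (simp add: zero_ereal_def)
  qed
  also have "\<dots> = T^2 / 2 * (L2_norm T f)^2"
    using L2_norm_sq[OF \<open>0 \<le> T\<close>] by (simp add: N_def)
  finally show ?thesis .
qed

lemma integral_mult_T_mu_le:
  fixes f w w' :: "real \<Rightarrow> real"
  assumes "0 \<le> T" "0 \<le> \<mu>" and f: "L2_on T f" and w: "H10 T w w'"
  shows "(LBINT t=0..T. f t * T_mu T \<mu> w w' t) \<le> T / sqrt 2 * L2_norm T f * H1mu_norm T \<mu> w w'"
proof -
  define c where "c = sqrt \<mu>"
  define X where "X = (LBINT t=0..T. f t * T_mu T \<mu> w w' t)"
  define K where "K = T / sqrt 2 * L2_norm T f"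
  note w_ac = H10_has_ac_deriv_on[OF w] and w' = H10_L2_on[OF w]
  note CS = Cf_Sf_has_ac_deriv[OF L2_on_set_integrable[OF f], of \<mu>, folded c_def]
  note to_set = interval_integral_Icc_0[OF \<open>0 \<le> T\<close>]
  note cont = has_ac_deriv_on_continuous_on[OF w_ac] has_ac_deriv_on_continuous_on[OF CS(1)]
    has_ac_deriv_on_continuous_on[OF CS(2)]
  have w'_meas: "set_borel_measurable lborel {0..T} w'" and w'_sq: "set_integrable lborel {0..T} (\<lambda>t. (w' t)^2)"
    using w' by (simp_all add: L2_on_def)
  have X_eq: "X = (LINT t:{0..T}|lborel. w' t * Cf \<mu> f t + (c * w t) * Sf \<mu> f t)"
    unfolding X_def integral_mult_T_mu_eq[OF \<open>0 \<le> T\<close> L2_on_set_integrable[OF f] w_ac] to_set c_def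
    by (simp add: mult.assoc)
  have CS_ineq: "(LINT t:{0..T}|lborel. w' t * Cf \<mu> f t + (c * w t) * Sf \<mu> f t)^2
      \<le> (LINT t:{0..T}|lborel. (w' t)^2 + (c * w t)^2) * (LINT t:{0..T}|lborel. (Cf \<mu> f t)^2 + (Sf \<mu> f t)^2)"
    by (rule Cauchy_Schwarz_set_integral2[OF w'_meas _ _ _ w'_sq];
        intro set_borel_measurable_continuous_on borel_integrable_atLeastAtMost' continuous_intros cont)
  have norm_eq: "(LINT t:{0..T}|lborel. (w' t)^2 + (c * w t)^2) = (H1mu_norm T \<mu> w w')^2"
  proof -
    have "set_integrable lborel {0..T} (\<lambda>t. (w t)^2)"
      using has_ac_deriv_on_continuous_on[OF w_ac]
      by (intro borel_integrable_atLeastAtMost' continuous_intros)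
    then show ?thesis
      using w'_sq \<open>0 \<le> \<mu>\<close> unfolding H1mu_norm_sq(1)[OF \<open>0 \<le> T\<close> \<open>0 \<le> \<mu>\<close>] to_set
      by (simp add: c_def power_mult_distrib)
  qed
  have K_bound: "(LINT t:{0..T}|lborel. (Cf \<mu> f t)^2 + (Sf \<mu> f t)^2) \<le> K^2"
    using integral_Cf_Sf_squares_le[OF \<open>0 \<le> T\<close> f, of \<mu>]
    unfolding to_set K_def by (simp add: power_mult_distrib power_divide)
  have "X^2 \<le> (H1mu_norm T \<mu> w w' * K)^2"
    using CS_ineq mult_left_mono[OF K_bound, of "(H1mu_norm T \<mu> w w')^2"]
    unfolding X_eq norm_eq by (simp add: power_mult_distrib)
  moreover have "0 \<le> H1mu_norm T \<mu> w w' * K"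
    using H1mu_norm_sq(2)[OF \<open>0 \<le> T\<close> \<open>0 \<le> \<mu>\<close>] L2_norm_sq(2)[OF \<open>0 \<le> T\<close>] \<open>0 \<le> T\<close>
    by (simp add: K_def)
  ultimately have "X \<le> H1mu_norm T \<mu> w w' * K"
    by (rule power2_le_imp_le)
  then show ?thesis
    by (simp add: X_def K_def mult.commute)
qed

lemma H1_deriv_T_mu:
  assumes w: "H1_deriv T w w'"
  shows "H1_deriv T (T_mu T \<mu> w w') (\<lambda>t. - sqrt \<mu> * S_mu T \<mu> w w' t - w' t)"
proof -
  note TS = T_mu_S_mu_has_ac_deriv[of w w' T \<mu>]
  have "has_ac_deriv_on w w' 0 T" "L2_on T w'"
    using w by (simp_all add: H1_deriv_iff)
  moreover from this have "L2_on T (\<lambda>t. - sqrt \<mu> * S_mu T \<mu> w w' t)"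
    using has_ac_deriv_on_continuous_on[OF TS(2)] by (intro L2_on_continuous_on continuous_intros)
  ultimately show ?thesis
    unfolding H1_deriv_iff using TS(1) L2_on_diff by blast
qed

lemma b_mu_T_mu_self:
  fixes u u' :: "real \<Rightarrow> real"
  assumes "0 \<le> T" "0 \<le> \<mu>" and u: "H10 T u u'"
  shows "b_mu T \<mu> u u' (T_mu T \<mu> u u') (\<lambda>t. - sqrt \<mu> * S_mu T \<mu> u u' t - u' t)
       = (H1mu_norm T \<mu> u u')^2"
proof -
  define c where "c = sqrt \<mu>"
  have c2: "c * c = \<mu>"
    using \<open>0 \<le> \<mu>\<close> by (simp add: c_def)
  note u_ac = H10_has_ac_deriv_on[OF u]
  note TS = T_mu_S_mu_has_ac_deriv[OF u_ac, of \<mu>, folded c_def]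
  define \<Psi>' where "\<Psi>' = (\<lambda>t. u' t * S_mu T \<mu> u u' t + u t * (c * (T_mu T \<mu> u u' t - u t)))"
  have \<Psi>: "has_ac_deriv_on (\<lambda>t. u t * S_mu T \<mu> u u' t) \<Psi>' 0 T"
    unfolding \<Psi>'_def by (rule has_ac_deriv_on_mult[OF u_ac TS(2)])
  have "(LBINT t=0..T. \<Psi>' t) = 0"
    using has_ac_deriv_on_integral_eq[OF \<Psi> \<open>0 \<le> T\<close>] u
    by (simp add: zero_ereal_def S_mu_end H10_def)
  moreover have "set_integrable lborel {0..T} (\<lambda>t. (u' t)^2)"
    using H10_L2_on[OF u] by (simp add: L2_on_def)
  moreover have "set_integrable lborel {0..T} (\<lambda>t. (u t)^2)"
    using has_ac_deriv_on_continuous_on[OF u_ac]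
    by (intro borel_integrable_atLeastAtMost' continuous_intros)
  moreover have "- u' t * (- c * S_mu T \<mu> u u' t - u' t) + \<mu> * u t * T_mu T \<mu> u u' t
      = (u' t)^2 + \<mu> * (u t)^2 + c * \<Psi>' t" for t
    unfolding \<Psi>'_def c2[symmetric] by (simp add: power2_eq_square algebra_simps)
  ultimately show ?thesis
    using has_ac_deriv_on_integrable[OF \<Psi>]
    unfolding b_mu_def H1mu_norm_sq(1)[OF \<open>0 \<le> T\<close> \<open>0 \<le> \<mu>\<close>] interval_integral_Icc_0[OF \<open>0 \<le> T\<close>]
    by (simp add: c_def)
qed

lemma H1mu_norm_le_if_tested_with_T_mu:
  fixes f u u' :: "real \<Rightarrow> real"
  assumes "0 \<le> T" "0 \<le> \<mu>" and f: "L2_on T f" and u: "H10 T u u'"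
    and test: "b_mu T \<mu> u u' (T_mu T \<mu> u u') (\<lambda>t. - sqrt \<mu> * S_mu T \<mu> u u' t - u' t)
             = (LBINT t=0..T. f t * T_mu T \<mu> u u' t)"
  shows "H1mu_norm T \<mu> u u' \<le> T / sqrt 2 * L2_norm T f"
proof -
  define H where "H = H1mu_norm T \<mu> u u'"
  define K where "K = T / sqrt 2 * L2_norm T f"
  have "H^2 = (LBINT t=0..T. f t * T_mu T \<mu> u u' t)"
    using b_mu_T_mu_self[OF assms(1-2) u] test by (simp add: H_def)
  also have "\<dots> \<le> K * H"
    using integral_mult_T_mu_le[OF assms(1-2) f u] by (simp add: H_def K_def mult.commute)
  finally have "H * H \<le> K * H"
    by (simp add: power2_eq_square)
  moreover have "0 \<le> H" "0 \<le> K"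
    using H1mu_norm_sq(2)[OF assms(1-2)] L2_norm_sq(2)[OF \<open>0 \<le> T\<close>] \<open>0 \<le> T\<close>
    by (simp_all add: H_def K_def)
  ultimately show ?thesis
    unfolding H_def[symmetric] K_def[symmetric]
    by (cases "H = 0") (auto intro: mult_right_le_imp_le)
qed

theorem mainTheorem4:
  fixes T \<mu> :: real and f :: "real \<Rightarrow> real"
  assumes "T > 0" and "\<mu> > 0" and "L2_on T f"
  shows "(\<forall>w w'. H10 T w w' \<longrightarrow>
            (LBINT t=0..T. f t * T_mu T \<mu> w w' t)
              = (LBINT t=0..T. w' t * Cf \<mu> f t + sqrt \<mu> * w t * Sf \<mu> f t))
    \<and> (LBINT t=0..T. (Cf \<mu> f t)^2 + (Sf \<mu> f t)^2) \<le> T^2 / 2 * (L2_norm T f)^2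
    \<and> (\<forall>w w'. H10 T w w' \<longrightarrow>
            (LBINT t=0..T. f t * T_mu T \<mu> w w' t)
              \<le> T / sqrt 2 * L2_norm T f * H1mu_norm T \<mu> w w')
    \<and> (\<forall>u u'. H10 T u u'
          \<and> (\<forall>w w' v'. H10 T w w' \<and> H1_deriv T (T_mu T \<mu> w w') v' \<longrightarrow>
                 b_mu T \<mu> u u' (T_mu T \<mu> w w') v' = (LBINT t=0..T. f t * T_mu T \<mu> w w' t))
          \<longrightarrow> H1mu_norm T \<mu> u u' \<le> T / sqrt 2 * L2_norm T f)"
proof -
  have T: "0 \<le> T" and \<mu>: "0 \<le> \<mu>" and f: "L2_on T f"
    using assms by simp_all
  have adjoint: "\<forall>w w'. H10 T w w' \<longrightarrow>
      (LBINT t=0..T. f t * T_mu T \<mu> w w' t) = (LBINT t=0..T. w' t * Cf \<mu> f t + sqrt \<mu> * w t * Sf \<mu> f t)"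
    using integral_mult_T_mu_eq[OF T L2_on_set_integrable[OF f] H10_has_ac_deriv_on] by blast
  have bound: "\<forall>w w'. H10 T w w' \<longrightarrow>
      (LBINT t=0..T. f t * T_mu T \<mu> w w' t) \<le> T / sqrt 2 * L2_norm T f * H1mu_norm T \<mu> w w'"
    using integral_mult_T_mu_le[OF T \<mu> f] by blast
  have energy: "\<forall>u u'. H10 T u u'
      \<and> (\<forall>w w' v'. H10 T w w' \<and> H1_deriv T (T_mu T \<mu> w w') v' \<longrightarrow>
             b_mu T \<mu> u u' (T_mu T \<mu> w w') v' = (LBINT t=0..T. f t * T_mu T \<mu> w w' t))
      \<longrightarrow> H1mu_norm T \<mu> u u' \<le> T / sqrt 2 * L2_norm T f"
  proof (intro allI impI, elim conjE)
    fix u u' assume u: "H10 T u u'" and weak: "\<forall>w w' v'. H10 T w w' \<and> H1_deriv T (T_mu T \<mu> w w') v' \<longrightarrow>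
        b_mu T \<mu> u u' (T_mu T \<mu> w w') v' = (LBINT t=0..T. f t * T_mu T \<mu> w w' t)"
    have "H1_deriv T (T_mu T \<mu> u u') (\<lambda>t. - sqrt \<mu> * S_mu T \<mu> u u' t - u' t)"
      using u by (intro H1_deriv_T_mu) (simp add: H10_def)
    with u weak show "H1mu_norm T \<mu> u u' \<le> T / sqrt 2 * L2_norm T f"
      by (intro H1mu_norm_le_if_tested_with_T_mu[OF T \<mu> f u]) blast
  qed
  show ?thesis
    by (intro conjI adjoint bound energy integral_Cf_Sf_squares_le[OF T f])
qed

end
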